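(* Let $\mathcal{D}$ be a $\{K_3,K_4\}$-decomposition of $K_{18}$ with $\alpha=13$, let $W$ be the set of vertices $x$ with $\alpha_x\ge 2$, and for $i\in\{0,1,2,3\}$ let $t_i$ be the number of copies of $K_3$ in $\mathcal{D}$ having exactly $i$ vertices in $W$. Then $(t_0,t_1,t_2,t_3)\neq(0,1,9,3)$.
   Context: A $\{K_3,K_4\}$-decomposition of $K_v$ is a collection of subgraphs, each isomorphic to $K_3$ or $K_4$, such that every edge of $K_v$ lies in exactly one of them. $\alpha$ is the number of copies of $K_3$ in the decomposition, and for a vertex $x$, $\alpha_x$ is the number of copies of $K_3$ in the decomposition containing $x$. *)

theory Defs
  imports Main
begin

definition K34_decomp :: "'a set \<Rightarrow> 'a set set \<Rightarrow> bool" where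
  "K34_decomp V D \<longleftrightarrow>
     (\<forall>B\<in>D. B \<subseteq> V \<and> (card B = 3 \<or> card B = 4)) \<and>
     (\<forall>x\<in>V. \<forall>y\<in>V. x \<noteq> y \<longrightarrow> (\<exists>!B. B \<in> D \<and> x \<in> B \<and> y \<in> B))"

definition triangles :: "'a set set \<Rightarrow> 'a set set" where
  "triangles D = {B \<in> D. card B = 3}"

definition alpha :: "'a set set \<Rightarrow> nat" where
  "alpha D = card (triangles D)"

definition alpha_at :: "'a set set \<Rightarrow> 'a \<Rightarrow> nat" where
  "alpha_at D x = card {B \<in> triangles D. x \<in> B}"

end

theory Submission
  imports Defs
begin

text \<open>Counting the edges at a vertex gives \<open>2 \<alpha>\<^sub>x + 3 \<beta>\<^sub>x = 17\<close>, where \<open>\<beta>\<^sub>x\<close> is the number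
of copies of \<open>K\<^sub>4\<close> through \<open>x\<close>; hence \<open>\<alpha>\<^sub>x \<equiv> 1 (mod 3)\<close>, and every vertex outside \<open>W\<close> lies in
exactly one triangle and five copies of \<open>K\<^sub>4\<close>. If \<open>(t\<^sub>0, t\<^sub>1, t\<^sub>2, t\<^sub>3) = (0, 1, 9, 3)\<close>, double
counting vertex-block incidences and the pairs of vertices of \<open>W\<close> yields \<open>|W| = 7\<close> and nineteen
copies of \<open>K\<^sub>4\<close> with \<open>\<Sum> c = 21\<close> and \<open>\<Sum> c (c - 1) = 6\<close>, where \<open>c\<close> counts the vertices in \<open>W\<close>.
So either some \<open>K\<^sub>4\<close> meets \<open>W\<close> in three vertices while every block meets \<open>W\<close>, or some \<open>K\<^sub>4\<close>
misses \<open>W\<close> and only three copies of \<open>K\<^sub>4\<close> meet \<open>W\<close> twice. In the first case a vertex outside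
\<open>W\<close> of that block would see at least \<open>3 + 5 = 8\<close> vertices of \<open>W\<close> through its six blocks. In the
second, each of the four vertices of the block missing \<open>W\<close> needs its own \<open>K\<^sub>4\<close> meeting \<open>W\<close>
twice in order to see all seven vertices of \<open>W\<close>.\<close>

definition quads :: "'a set set \<Rightarrow> 'a set set" where
  "quads D = {B \<in> D. card B = 4}"

definition beta_at :: "'a set set \<Rightarrow> 'a \<Rightarrow> nat" where
  "beta_at D x = card {B \<in> quads D. x \<in> B}"

lemma sum_incidences:
  assumes "finite S" "finite F"
  shows "(\<Sum>x\<in>S. \<Sum>B\<in>{B \<in> F. x \<in> B}. f B) = (\<Sum>B\<in>F. card (B \<inter> S) * f B)"
proof -
  have "(\<Sum>x\<in>S. \<Sum>B\<in>{B \<in> F. x \<in> B}. f B) = (\<Sum>B\<in>F. \<Sum>x\<in>{x \<in> S. x \<in> B}. f B)"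
    by (rule sum.swap_restrict[OF assms])
  also have "\<dots> = (\<Sum>B\<in>F. card (B \<inter> S) * f B)"
    by (intro sum.cong) (auto simp: Int_def conj_commute)
  finally show ?thesis .
qed

lemma sum_comp_eq_sum_card_fibres:
  assumes "finite F" "finite I" "g ` F \<subseteq> I"
  shows "(\<Sum>B\<in>F. h (g B)) = (\<Sum>i\<in>I. h i * card {B \<in> F. g B = i})"
  using sum.group[OF assms, of "h \<circ> g"] by (simp add: mult.commute)

lemma profile_cases_19_21_6:
  fixes c :: "'b \<Rightarrow> nat"
  assumes "finite F" "\<forall>K\<in>F. c K \<le> 4" "card F = 19"
    and "(\<Sum>K\<in>F. c K) = 21" "(\<Sum>K\<in>F. c K * (c K - 1)) = 6"
  shows "(\<exists>K\<in>F. c K = 3) \<and> (\<forall>K\<in>F. c K \<noteq> 0) \<or> (\<exists>K\<in>F. c K = 0) \<and> card {K \<in> F. 2 \<le> c K} = 3"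
proof -
  define n where "n i = card {K \<in> F. c K = i}" for i
  have fibres: "(\<Sum>K\<in>F. h (c K)) = (\<Sum>i\<le>4. h i * n i)" for h :: "nat \<Rightarrow> nat"
    unfolding n_def using assms(1,2) by (intro sum_comp_eq_sum_card_fibres) auto
  have E0: "n 0 + n 1 + n 2 + n 3 + n 4 = 19"
    using fibres[of "\<lambda>_. 1"] assms(3) by (simp add: numeral_eq_Suc)
  have E1: "n 1 + 2 * n 2 + 3 * n 3 + 4 * n 4 = 21"
    using fibres[of id] assms(4) by (simp add: numeral_eq_Suc)
  have E2: "2 * n 2 + 6 * n 3 + 12 * n 4 = 6"
    using fibres[of "\<lambda>i. i * (i - 1)"] assms(5) by (simp add: numeral_eq_Suc)
  have twice: "card {K \<in> F. 2 \<le> c K} = n 2 + n 3 + n 4"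
    using fibres[of "\<lambda>i. if 2 \<le> i then 1 else 0"] assms(1)
    by (simp add: numeral_eq_Suc sum.If_cases Collect_conj_eq)
  have "n 4 = 0" "n 3 = 0 \<or> n 3 = 1"
    using E2 by (cases "n 4"; cases "n 3"; simp)+
  then have "n 3 \<noteq> 0 \<and> n 0 = 0 \<or> n 0 \<noteq> 0 \<and> card {K \<in> F. 2 \<le> c K} = 3"
    using E0 E1 E2 twice by linarith
  then show ?thesis
    unfolding n_def using assms(1) by (auto simp: card_eq_0_iff)
qed

locale K34_decomposition =
  fixes V :: "'a set" and D :: "'a set set"
  assumes finite_V: "finite V" and decomp: "K34_decomp V D"
begin

lemma block_subset: "B \<in> D \<Longrightarrow> B \<subseteq> V"
  using decomp unfolding K34_decomp_def by blast

lemma card_block: "B \<in> D \<Longrightarrow> card B = 3 \<or> card B = 4"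
  using decomp unfolding K34_decomp_def by blast

lemma finite_block: "B \<in> D \<Longrightarrow> finite B"
  using block_subset finite_V finite_subset by blast

lemma finite_D: "finite D"
  using block_subset finite_V by (meson Pow_iff finite_Pow_iff finite_subset subsetI)

lemma finite_triangles: "finite (triangles D)" and finite_quads: "finite (quads D)"
  using finite_D by (simp_all add: triangles_def quads_def)

lemma ex_block: "x \<in> V \<Longrightarrow> y \<in> V \<Longrightarrow> x \<noteq> y \<Longrightarrow> \<exists>B\<in>D. x \<in> B \<and> y \<in> B"
  using decomp unfolding K34_decomp_def by blast

lemma block_unique:
  assumes "B \<in> D" "B' \<in> D" "x \<in> B" "x \<in> B'" "y \<in> B" "y \<in> B'" "x \<noteq> y"
  shows "B = B'"
proof -
  have "x \<in> V" "y \<in> V" using assms block_subset by auto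
  then have "\<exists>!B. B \<in> D \<and> x \<in> B \<and> y \<in> B"
    using decomp \<open>x \<noteq> y\<close> unfolding K34_decomp_def by blast
  then show ?thesis using assms by blast
qed

lemma sum_blocks_split:
  "(\<Sum>B\<in>{B \<in> D. P B}. f B) = (\<Sum>B\<in>{B \<in> triangles D. P B}. f B) + (\<Sum>B\<in>{B \<in> quads D. P B}. f B)"
proof -
  have "{B \<in> D. P B} = {B \<in> triangles D. P B} \<union> {B \<in> quads D. P B}"
    using card_block by (auto simp: triangles_def quads_def)
  moreover have "{B \<in> triangles D. P B} \<inter> {B \<in> quads D. P B} = {}"
    by (auto simp: triangles_def quads_def)
  ultimately show ?thesis
    using finite_triangles finite_quads by (simp add: sum.union_disjoint)
qed

lemma card_Diff_eq_sum_blocks_at: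
  assumes "x \<in> V" "S \<subseteq> V"
  shows "card (S - {x}) = (\<Sum>B\<in>{B \<in> D. x \<in> B}. card (B \<inter> S - {x}))"
proof -
  have "S - {x} = (\<Union>B\<in>{B \<in> D. x \<in> B}. B \<inter> S - {x})"
    using ex_block[OF assms(1)] assms(2) by blast
  moreover have "card (\<Union>B\<in>{B \<in> D. x \<in> B}. B \<inter> S - {x})
      = (\<Sum>B\<in>{B \<in> D. x \<in> B}. card (B \<inter> S - {x}))"
  proof (rule card_UN_disjoint)
    show "\<forall>B\<in>{B \<in> D. x \<in> B}. \<forall>B'\<in>{B \<in> D. x \<in> B}. B \<noteq> B' \<longrightarrow> (B \<inter> S - {x}) \<inter> (B' \<inter> S - {x}) = {}"
      using block_unique by blast
  qed (use finite_D finite_block in auto)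
  ultimately show ?thesis by simp
qed

lemma card_eq_sum_blocks_at:
  assumes "x \<in> V" "S \<subseteq> V" "x \<notin> S"
  shows "card S = (\<Sum>B\<in>{B \<in> D. x \<in> B}. card (B \<inter> S))"
  using card_Diff_eq_sum_blocks_at[OF assms(1,2)] assms(3) by simp

lemma degree_equation:
  assumes "x \<in> V"
  shows "2 * alpha_at D x + 3 * beta_at D x = card V - 1"
proof -
  have "card V - 1 = card (V - {x})"
    using assms finite_V by simp
  also have "\<dots> = (\<Sum>B\<in>{B \<in> D. x \<in> B}. card B - 1)"
    using card_Diff_eq_sum_blocks_at[OF assms subset_refl] block_subset finite_block
    by (simp add: Int_absorb2)
  also have "\<dots> = (\<Sum>B\<in>{B \<in> triangles D. x \<in> B}. card B - 1) + (\<Sum>B\<in>{B \<in> quads D. x \<in> B}. card B - 1)"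
    by (rule sum_blocks_split)
  also have "\<dots> = (\<Sum>B\<in>{B \<in> triangles D. x \<in> B}. 2) + (\<Sum>B\<in>{B \<in> quads D. x \<in> B}. 3)"
    by (simp add: triangles_def quads_def)
  finally show ?thesis by (simp add: alpha_at_def beta_at_def)
qed

lemma sum_degree_equation:
  assumes "S \<subseteq> V"
  shows "2 * (\<Sum>x\<in>S. alpha_at D x) + 3 * (\<Sum>x\<in>S. beta_at D x) = (card V - 1) * card S"
proof -
  have "(\<Sum>x\<in>S. 2 * alpha_at D x + 3 * beta_at D x) = (\<Sum>x\<in>S. card V - 1)"
    using degree_equation assms by (intro sum.cong) auto
  then show ?thesis by (simp add: sum.distrib sum_distrib_left)
qed

lemma sum_alpha_at:
  assumes "S \<subseteq> V"
  shows "(\<Sum>x\<in>S. alpha_at D x) = (\<Sum>B\<in>triangles D. card (B \<inter> S))"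
  using sum_incidences[of S "triangles D" "\<lambda>_. 1"] finite_subset[OF assms finite_V] finite_triangles
  by (simp add: alpha_at_def)

lemma sum_beta_at:
  assumes "S \<subseteq> V"
  shows "(\<Sum>x\<in>S. beta_at D x) = (\<Sum>B\<in>quads D. card (B \<inter> S))"
  using sum_incidences[of S "quads D" "\<lambda>_. 1"] finite_subset[OF assms finite_V] finite_quads
  by (simp add: beta_at_def)

lemma sum_alpha_at_V: "(\<Sum>x\<in>V. alpha_at D x) = 3 * alpha D"
  using sum_alpha_at[OF subset_refl] block_subset
  by (simp add: alpha_def triangles_def Int_absorb2)

lemma sum_beta_at_V: "(\<Sum>x\<in>V. beta_at D x) = 4 * card (quads D)"
  using sum_beta_at[OF subset_refl] block_subset
  by (simp add: quads_def Int_absorb2)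

lemma count_edges: "6 * alpha D + 12 * card (quads D) = (card V - 1) * card V"
  using sum_degree_equation[OF subset_refl] by (simp add: sum_alpha_at_V sum_beta_at_V)

lemma count_pairs:
  assumes "S \<subseteq> V"
  shows "card S * (card S - 1) = (\<Sum>B\<in>D. card (B \<inter> S) * (card (B \<inter> S) - 1))"
proof -
  have "(\<Sum>x\<in>S. card (S - {x})) = (\<Sum>x\<in>S. \<Sum>B\<in>{B \<in> D. x \<in> B}. card (B \<inter> S) - 1)"
  proof (rule sum.cong[OF refl])
    fix x assume "x \<in> S"
    then have "card (S - {x}) = (\<Sum>B\<in>{B \<in> D. x \<in> B}. card (B \<inter> S - {x}))"
      using card_Diff_eq_sum_blocks_at assms by blast
    also have "\<dots> = (\<Sum>B\<in>{B \<in> D. x \<in> B}. card (B \<inter> S) - 1)"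
      using \<open>x \<in> S\<close> finite_block by (intro sum.cong) auto
    finally show "card (S - {x}) = (\<Sum>B\<in>{B \<in> D. x \<in> B}. card (B \<inter> S) - 1)" .
  qed
  also have "\<dots> = (\<Sum>B\<in>D. card (B \<inter> S) * (card (B \<inter> S) - 1))"
    by (rule sum_incidences[OF finite_subset[OF assms finite_V] finite_D])
  finally show ?thesis
    using assms finite_V finite_subset by (simp add: mult.commute)
qed

lemma sum_triangles_by_card_Int:
  "(\<Sum>B\<in>triangles D. h (card (B \<inter> S))) = (\<Sum>i\<le>3. h i * card {B \<in> triangles D. card (B \<inter> S) = i})"
proof (rule sum_comp_eq_sum_card_fibres)
  show "(\<lambda>B. card (B \<inter> S)) ` triangles D \<subseteq> {..3}"
    using finite_block card_mono[of _ "_ \<inter> S"] by (fastforce simp: triangles_def)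
qed (simp_all add: finite_triangles)

end

locale K18_decomposition = K34_decomposition +
  assumes card_V: "card V = 18"
begin

definition heavy :: "'a set" where
  "heavy = {x \<in> V. 2 \<le> alpha_at D x}"

lemma heavy_subset: "heavy \<subseteq> V"
  by (auto simp: heavy_def)

lemma alpha_at_light:
  assumes "x \<in> V" "x \<notin> heavy"
  shows "alpha_at D x = 1"
proof -
  have "2 * alpha_at D x + 3 * beta_at D x = 17" "alpha_at D x < 2"
    using degree_equation assms card_V by (auto simp: heavy_def)
  then show ?thesis by presburger
qed

lemma beta_at_light: "x \<in> V \<Longrightarrow> x \<notin> heavy \<Longrightarrow> beta_at D x = 5"
  using degree_equation[of x] alpha_at_light[of x] card_V by simp

lemma card_blocks_at_light:
  assumes "x \<in> V" "x \<notin> heavy"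
  shows "card {B \<in> D. x \<in> B} = 6"
  using sum_blocks_split[where P = "\<lambda>B. x \<in> B" and f = "\<lambda>_. 1::nat"] alpha_at_light[OF assms] beta_at_light[OF assms]
  by (simp add: alpha_at_def beta_at_def)

lemma card_heavy: "card heavy + 3 * alpha D = 18 + (\<Sum>x\<in>heavy. alpha_at D x)"
proof -
  have "3 * alpha D = (\<Sum>x\<in>heavy. alpha_at D x) + (\<Sum>x\<in>V - heavy. alpha_at D x)"
    using sum_alpha_at_V sum.subset_diff[OF heavy_subset finite_V, of "alpha_at D"] by linarith
  also have "(\<Sum>x\<in>V - heavy. alpha_at D x) = card (V - heavy)"
    using alpha_at_light by simp
  also have "\<dots> = 18 - card heavy"
    using card_Diff_subset[OF finite_subset[OF heavy_subset finite_V] heavy_subset] card_V by simp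
  finally show ?thesis
    using card_mono[OF finite_V heavy_subset] card_V by linarith
qed

lemma card_heavy_eq_sum_blocks_at_light:
  assumes "x \<in> V" "x \<notin> heavy"
  shows "card heavy = (\<Sum>B\<in>{B \<in> triangles D. x \<in> B}. card (B \<inter> heavy))
    + (\<Sum>B\<in>{B \<in> quads D. x \<in> B}. card (B \<inter> heavy))"
  using card_eq_sum_blocks_at[OF assms(1) heavy_subset assms(2)] sum_blocks_split by simp

lemma eight_le_card_heavy:
  assumes meets: "\<forall>B\<in>D. B \<inter> heavy \<noteq> {}" and K: "K \<in> quads D" "card (K \<inter> heavy) = 3"
  shows "8 \<le> card heavy"
proof -
  have "K \<in> D" "card K = 4" using K by (auto simp: quads_def)
  then have "K \<inter> heavy \<noteq> K" using K(2) by auto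
  then obtain v where v: "v \<in> K" "v \<notin> heavy" by blast
  have "v \<in> V" using v \<open>K \<in> D\<close> block_subset by blast
  define Dv where "Dv = {B \<in> D. v \<in> B}"
  have "K \<in> Dv" "finite Dv" using v \<open>K \<in> D\<close> finite_D by (auto simp: Dv_def)
  have "card heavy = (\<Sum>B\<in>Dv. card (B \<inter> heavy))"
    unfolding Dv_def using card_eq_sum_blocks_at[OF \<open>v \<in> V\<close> heavy_subset v(2)] .
  also have "\<dots> = 3 + (\<Sum>B\<in>Dv - {K}. card (B \<inter> heavy))"
    using sum.remove[OF \<open>finite Dv\<close> \<open>K \<in> Dv\<close>, of "\<lambda>B. card (B \<inter> heavy)"] K(2) by simp
  finally have seen_from_v: "card heavy = 3 + (\<Sum>B\<in>Dv - {K}. card (B \<inter> heavy))" .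
  have "card (Dv - {K}) = 5"
    using card_blocks_at_light[OF \<open>v \<in> V\<close> v(2)] \<open>K \<in> Dv\<close> \<open>finite Dv\<close> by (simp add: Dv_def)
  moreover have "card (Dv - {K}) \<le> (\<Sum>B\<in>Dv - {K}. card (B \<inter> heavy))"
    unfolding card_eq_sum[of "Dv - {K}"] using meets finite_block
    by (intro sum_mono) (auto simp: Dv_def Suc_le_eq card_gt_0_iff)
  ultimately show ?thesis using seen_from_v by linarith
qed

lemma light_vertex_in_quad_meeting_heavy_twice:
  assumes "7 \<le> card heavy" "Q \<in> quads D" "Q \<inter> heavy = {}" "q \<in> Q"
  shows "\<exists>K\<in>quads D. 2 \<le> card (K \<inter> heavy) \<and> q \<in> K"
proof (rule ccontr)
  assume none: "\<not> ?thesis"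
  have "Q \<in> D" using assms(2) by (simp add: quads_def)
  then have q: "q \<in> V" "q \<notin> heavy" using assms(3,4) block_subset by auto
  have "(\<Sum>B\<in>{B \<in> triangles D. q \<in> B}. card (B \<inter> heavy)) \<le> (\<Sum>B\<in>{B \<in> triangles D. q \<in> B}. 2)"
  proof (rule sum_mono)
    fix B assume B: "B \<in> {B \<in> triangles D. q \<in> B}"
    then have "card (B - {q}) = 2" "finite B" using finite_block by (auto simp: triangles_def)
    moreover have "card (B \<inter> heavy) \<le> card (B - {q})"
      using q(2) \<open>finite B\<close> by (intro card_mono) auto
    ultimately show "card (B \<inter> heavy) \<le> 2" by simp
  qed
  then have triangle_part: "(\<Sum>B\<in>{B \<in> triangles D. q \<in> B}. card (B \<inter> heavy)) \<le> 2"
    using alpha_at_light[OF q] by (simp add: alpha_at_def)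
  define Kq where "Kq = {B \<in> quads D. q \<in> B}"
  have "Q \<in> Kq" "finite Kq" using assms(2,4) finite_quads by (auto simp: Kq_def)
  have "(\<Sum>B\<in>Kq. card (B \<inter> heavy)) = (\<Sum>B\<in>Kq - {Q}. card (B \<inter> heavy))"
    using sum.remove[OF \<open>finite Kq\<close> \<open>Q \<in> Kq\<close>, of "\<lambda>B. card (B \<inter> heavy)"] assms(3) by simp
  also have "\<dots> \<le> (\<Sum>B\<in>Kq - {Q}. 1)"
    using none by (intro sum_mono) (auto simp: Kq_def)
  also have "\<dots> = 4"
    using beta_at_light[OF q] \<open>Q \<in> Kq\<close> \<open>finite Kq\<close> by (simp add: Kq_def beta_at_def)
  finally have "(\<Sum>B\<in>Kq. card (B \<inter> heavy)) \<le> 4" .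
  then show False
    using card_heavy_eq_sum_blocks_at_light[OF q] triangle_part assms(1) by (simp add: Kq_def)
qed

lemma four_le_card_quads_meeting_heavy_twice:
  assumes "7 \<le> card heavy" "Q \<in> quads D" "Q \<inter> heavy = {}"
  shows "4 \<le> card {K \<in> quads D. 2 \<le> card (K \<inter> heavy)}"
proof -
  let ?A = "{K \<in> quads D. 2 \<le> card (K \<inter> heavy)}"
  have "\<forall>q\<in>Q. \<exists>K. K \<in> ?A \<and> q \<in> K"
    using light_vertex_in_quad_meeting_heavy_twice[OF assms] by blast
  then obtain f where f: "\<And>q. q \<in> Q \<Longrightarrow> f q \<in> ?A \<and> q \<in> f q"
    by (metis bchoice)
  have "inj_on f Q"
  proof
    fix q q' assume "q \<in> Q" "q' \<in> Q" "f q = f q'"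
    show "q = q'"
    proof (rule ccontr)
      assume "q \<noteq> q'"
      have "f q \<in> D" "Q \<in> D" using f[OF \<open>q \<in> Q\<close>] assms(2) by (auto simp: quads_def)
      then have "f q = Q"
        using f \<open>q \<in> Q\<close> \<open>q' \<in> Q\<close> \<open>f q = f q'\<close> \<open>q \<noteq> q'\<close>
        by (intro block_unique[of "f q" Q q q']) auto
      then show False using f[OF \<open>q \<in> Q\<close>] assms(3) by simp
    qed
  qed
  then have "card Q \<le> card ?A"
    using f finite_quads by (intro card_inj_on_le) auto
  then show ?thesis using assms(2) by (simp add: quads_def)
qed

lemma counts_from_triangle_sums:
  assumes "alpha D = 13" "(\<Sum>B\<in>triangles D. card (B \<inter> heavy)) = 28"
    "(\<Sum>B\<in>triangles D. card (B \<inter> heavy) * (card (B \<inter> heavy) - 1)) = 36"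
  shows "card heavy = 7" "card (quads D) = 19" "(\<Sum>K\<in>quads D. card (K \<inter> heavy)) = 21"
    "(\<Sum>K\<in>quads D. card (K \<inter> heavy) * (card (K \<inter> heavy) - 1)) = 6"
proof -
  show card_heavy_7: "card heavy = 7"
    using card_heavy sum_alpha_at[OF heavy_subset] assms(1,2) by simp
  show "card (quads D) = 19"
    using count_edges card_V assms(1) by simp
  show "(\<Sum>K\<in>quads D. card (K \<inter> heavy)) = 21"
    using sum_degree_equation[OF heavy_subset] sum_alpha_at[OF heavy_subset] sum_beta_at[OF heavy_subset]
      assms(2) card_heavy_7 card_V by simp
  show "(\<Sum>K\<in>quads D. card (K \<inter> heavy) * (card (K \<inter> heavy) - 1)) = 6"
    using count_pairs[OF heavy_subset] assms(3) card_heavy_7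
      sum_blocks_split[where P = "\<lambda>_. True" and f = "\<lambda>B. card (B \<inter> heavy) * (card (B \<inter> heavy) - 1)"]
    by simp
qed

lemma ex_triangle_disjoint_heavy:
  assumes "card heavy = 7" "card (quads D) = 19" "(\<Sum>K\<in>quads D. card (K \<inter> heavy)) = 21"
    "(\<Sum>K\<in>quads D. card (K \<inter> heavy) * (card (K \<inter> heavy) - 1)) = 6"
  shows "\<exists>B\<in>triangles D. B \<inter> heavy = {}"
proof (rule ccontr)
  assume triangles_meet: "\<not> ?thesis"
  have "\<forall>K\<in>quads D. card (K \<inter> heavy) \<le> 4"
    using finite_block card_mono[of _ "_ \<inter> heavy"] by (fastforce simp: quads_def)
  then consider (three) "\<exists>K\<in>quads D. card (K \<inter> heavy) = 3" "\<forall>K\<in>quads D. card (K \<inter> heavy) \<noteq> 0"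
    | (zero) "\<exists>Q\<in>quads D. card (Q \<inter> heavy) = 0" "card {K \<in> quads D. 2 \<le> card (K \<inter> heavy)} = 3"
    using profile_cases_19_21_6[OF finite_quads, where c = "\<lambda>K. card (K \<inter> heavy)"] assms(2-4) by blast
  then show False
  proof cases
    case three
    have "\<forall>B\<in>quads D. B \<inter> heavy \<noteq> {}"
      using three(2) by (metis card.empty)
    then have "\<forall>B\<in>D. B \<inter> heavy \<noteq> {}"
      using triangles_meet card_block by (auto simp: triangles_def quads_def)
    with three(1) have "8 \<le> card heavy"
      using eight_le_card_heavy by blast
    then show False using assms(1) by simp
  next
    case zero
    then obtain Q where "Q \<in> quads D" "card (Q \<inter> heavy) = 0" by blast
    moreover from this have "Q \<inter> heavy = {}"
      using finite_block by (simp add: quads_def)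
    ultimately have "4 \<le> card {K \<in> quads D. 2 \<le> card (K \<inter> heavy)}"
      using four_le_card_quads_meeting_heavy_twice assms(1) by simp
    then show False using zero(2) by simp
  qed
qed

end

theorem mainTheorem16:
  fixes V :: "'a set" and D :: "'a set set"
  assumes "finite V" and "card V = 18"
    and "K34_decomp V D"
    and "alpha D = 13"
  defines "W \<equiv> {x \<in> V. alpha_at D x \<ge> 2}"
  defines "t \<equiv> (\<lambda>i::nat. card {B \<in> triangles D. card (B \<inter> W) = i})"
  shows "(t 0, t 1, t 2, t 3) \<noteq> (0, 1, 9, 3)"
proof
  assume "(t 0, t 1, t 2, t 3) = (0, 1, 9, 3)"
  then have t: "t 0 = 0" "t 1 = 1" "t 2 = 9" "t 3 = 3" by simp_all
  interpret K18_decomposition V D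
    using assms(1-3) by unfold_locales
  have "W = heavy" unfolding W_def heavy_def by auto
  have "(\<Sum>B\<in>triangles D. card (B \<inter> heavy)) = 28"
    "(\<Sum>B\<in>triangles D. card (B \<inter> heavy) * (card (B \<inter> heavy) - 1)) = 36"
    using sum_triangles_by_card_Int[of id heavy] sum_triangles_by_card_Int[of "\<lambda>i. i * (i - 1)" heavy] t
    unfolding t_def \<open>W = heavy\<close> by (simp_all add: numeral_eq_Suc)
  then obtain B where "B \<in> triangles D" "B \<inter> heavy = {}"
    using ex_triangle_disjoint_heavy[OF counts_from_triangle_sums[OF assms(4)]] by blast
  then have "t 0 \<noteq> 0"
    using finite_triangles unfolding t_def \<open>W = heavy\<close> by (auto simp: card_eq_0_iff)
  then show False using t(1) by simp
qed

end
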